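(* Let $f:[0,\infty)\to[0,\infty)$ be continuously differentiable with $f>0$ on $[t_0,\infty)$ for some $t_0\ge0$ and $f\in C^2([t_0,\infty))$, let $g=\log f$ on $[t_0,\infty)$, and assume condition (H1) of the context. Then for every $M>0$, $$\lim_{t\to\infty}\sup_{-M\le y\le M}\left|\frac{g'\big(t+\frac{y}{g'(t)}\big)}{g'(t)}-1\right|=0.$$
   Context: Condition (H1): (i) $g'(t)>0$ and $g''(t)>0$ for all $t\ge t_0$, and there is a pair $(q,p)$ with either $q=1$ and $p\in(0,\infty]$, or $q\in(1,\infty)$ and $p\in(0,\infty)$, such that $\lim_{t\to\infty}\frac{g'(t)^2}{g(t)g''(t)}=q$ and $\lim_{t\to\infty}\frac{tg'(t)}{g(t)}=p$; (ii) if $q=1$, then $tg'(t)/g(t)$ is nondecreasing on $[t_0,\infty)$ and there exist $k\in\mathbb{N}$ and $\hat g\in C^2([t_0,\infty))$ with $f=\exp_k\circ\hat g$ and $\hat g'/\hat g$ nonincreasing on $[t_0,\infty)$ ($\exp_1=\exp$, $\exp_k=\exp_{k-1}\circ\exp$). *)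

theory Defs
  imports "HOL-Analysis.Analysis"
begin

definition exp_iter :: "nat \<Rightarrow> real \<Rightarrow> real" where
  "exp_iter k = (exp ^^ k)"

end

theory Submission
  imports Defs "HOL-Real_Asymp.Real_Asymp"
begin

(* Since g'' > 0, g' is increasing and g grows at least linearly, so the hypothesis
   g'^2 / (g g'') \<rightarrow> q \<ge> 1 forces (1/g')' = -g''/g'^2 \<rightarrow> 0. Hence 1/g' is eventually
   Lipschitz with an arbitrarily small constant \<eta>; on the window |s| \<le> M/g'(t) this gives
   |1/g'(t+s) - 1/g'(t)| \<le> \<eta> M / g'(t), i.e. g'(t)/g'(t+s) is within \<eta> M of 1. *)

lemma mono_on_atLeast_if_deriv_nonneg:
  fixes u u' :: "real \<Rightarrow> real"
  assumes deriv: "\<And>x. x \<ge> a \<Longrightarrow> (u has_real_derivative u' x) (at x within {a..})"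
    and nonneg: "\<And>x. x \<ge> a \<Longrightarrow> u' x \<ge> 0"
  shows "mono_on {a..} u"
proof (rule mono_onI)
  fix r s assume "r \<in> {a..}" "s \<in> {a..}" "r \<le> s"
  have "\<exists>x\<in>{r..s}. u s - u r = u' x * (s - r)"
  proof (rule mvt_very_simple[OF \<open>r \<le> s\<close>])
    fix x assume "r \<le> x" "x \<le> s"
    then have "(u has_real_derivative u' x) (at x within {r..s})"
      using deriv[of x] \<open>r \<in> {a..}\<close> by (auto intro: DERIV_subset)
    then show "(u has_derivative (\<lambda>h. u' x * h)) (at x within {r..s})"
      by (simp add: has_field_derivative_def mult_commute_abs)
  qed
  then obtain x where "x \<in> {r..s}" "u s - u r = u' x * (s - r)" by blast
  moreover have "u' x \<ge> 0" using nonneg \<open>x \<in> {r..s}\<close> \<open>r \<in> {a..}\<close> by auto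
  ultimately show "u r \<le> u s"
    using \<open>r \<le> s\<close> mult_nonneg_nonneg[of "u' x" "s - r"] by linarith
qed

lemma filterlim_at_top_if_deriv_ge_pos:
  fixes u u' :: "real \<Rightarrow> real"
  assumes deriv: "\<And>x. x \<ge> a \<Longrightarrow> (u has_real_derivative u' x) (at x within {a..})"
    and lower: "\<And>x. x \<ge> a \<Longrightarrow> u' x \<ge> c" and "c > 0"
  shows "filterlim u at_top at_top"
proof -
  have "mono_on {a..} (\<lambda>x. u x - c * x)"
    using deriv lower
    by (intro mono_on_atLeast_if_deriv_nonneg[where u' = "\<lambda>x. u' x - c"])
       (auto intro!: derivative_eq_intros)
  then have linear_bound: "u a + c * (x - a) \<le> u x" if "x \<ge> a" for x
    using that by (auto dest: mono_onD[of _ _ a x] simp: algebra_simps)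
  have "filterlim (\<lambda>x. u a + c * (x - a)) at_top at_top"
    using \<open>c > 0\<close> by real_asymp
  moreover have "eventually (\<lambda>x. u a + c * (x - a) \<le> u x) at_top"
    using eventually_ge_at_top[of a] by eventually_elim (rule linear_bound)
  ultimately show ?thesis
    by (rule filterlim_at_top_mono)
qed

lemma eventually_lipschitz_if_deriv_tendsto_0:
  fixes v v' :: "real \<Rightarrow> real"
  assumes deriv: "\<And>x. x \<ge> a \<Longrightarrow> (v has_real_derivative v' x) (at x within {a..})"
    and lim: "(v' \<longlongrightarrow> 0) at_top" and "\<eta> > 0"
  obtains T where "T \<ge> a" "\<And>x z. x \<ge> T \<Longrightarrow> z \<ge> T \<Longrightarrow> \<bar>v z - v x\<bar> \<le> \<eta> * \<bar>z - x\<bar>"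
proof -
  have "eventually (\<lambda>x. \<bar>v' x\<bar> \<le> \<eta>) at_top"
    using tendstoD[OF lim \<open>\<eta> > 0\<close>] by eventually_elim (simp add: dist_norm)
  then obtain T0 where T0: "\<And>x. x \<ge> T0 \<Longrightarrow> \<bar>v' x\<bar> \<le> \<eta>"
    by (auto simp: eventually_at_top_linorder)
  define T where "T = max a T0"
  have "\<bar>v z - v x\<bar> \<le> \<eta> * \<bar>z - x\<bar>" if "x \<ge> T" "z \<ge> T" for x z
  proof -
    have "norm (v z - v x) \<le> \<eta> * norm (z - x)"
    proof (rule field_differentiable_bound[where S = "{T..}"])
      fix w assume "w \<in> {T..}"
      then show "(v has_field_derivative v' w) (at w within {T..})"
        using deriv[of w] by (auto simp: T_def intro: DERIV_subset)
      show "norm (v' w) \<le> \<eta>" using T0[of w] \<open>w \<in> {T..}\<close> by (simp add: T_def)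
    qed (use that in auto)
    then show ?thesis by simp
  qed
  then show ?thesis using that[of T] by (simp add: T_def)
qed

lemma tendsto_SUP_abs_0_if_uniform:
  fixes h :: "'a \<Rightarrow> 'b \<Rightarrow> real"
  assumes "S \<noteq> {}"
    and uniform: "\<And>e. e > 0 \<Longrightarrow> eventually (\<lambda>x. \<forall>y\<in>S. \<bar>h x y\<bar> \<le> e) F"
  shows "((\<lambda>x. SUP y\<in>S. \<bar>h x y\<bar>) \<longlongrightarrow> 0) F"
proof (rule tendstoI)
  fix e :: real assume "e > 0"
  have "eventually (\<lambda>x. \<forall>y\<in>S. \<bar>h x y\<bar> \<le> e / 2) F"
    using \<open>e > 0\<close> by (intro uniform) simp
  then show "eventually (\<lambda>x. dist (SUP y\<in>S. \<bar>h x y\<bar>) 0 < e) F"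
  proof eventually_elim
    case (elim x)
    obtain y where "y \<in> S" using \<open>S \<noteq> {}\<close> by blast
    have "0 \<le> \<bar>h x y\<bar>" by simp
    also have "\<dots> \<le> (SUP y\<in>S. \<bar>h x y\<bar>)"
      using elim \<open>y \<in> S\<close> by (intro cSUP_upper bdd_aboveI2[where M = "e / 2"]) auto
    finally have "0 \<le> (SUP y\<in>S. \<bar>h x y\<bar>)" .
    moreover have "(SUP y\<in>S. \<bar>h x y\<bar>) \<le> e / 2"
      using elim \<open>S \<noteq> {}\<close> by (intro cSUP_least) auto
    ultimately show ?case using \<open>e > 0\<close> by (simp add: dist_norm)
  qed
qed

lemma abs_ratio_sub_1_le_if_abs_inverse_diff_le:
  fixes x y \<delta> :: real
  assumes "x > 0" "y > 0" "\<bar>inverse y - inverse x\<bar> \<le> \<delta> / x" "\<delta> \<le> 1 / 2"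
  shows "\<bar>y / x - 1\<bar> \<le> 2 * \<delta>"
proof -
  define r where "r = x / y"
  have "r - 1 = (inverse y - inverse x) * x"
    using assms(1,2) by (simp add: r_def field_simps)
  then have r_close: "\<bar>r - 1\<bar> \<le> \<delta>"
    using assms(1,3) by (simp add: abs_mult field_simps)
  then have "r \<ge> 1 / 2" using assms(4) by linarith
  have "\<bar>y / x - 1\<bar> = \<bar>r - 1\<bar> / r"
    using assms(1,2) \<open>r \<ge> 1 / 2\<close> by (simp add: r_def field_simps abs_minus_commute)
  also have "\<dots> \<le> \<delta> / (1 / 2)"
    using r_close \<open>r \<ge> 1 / 2\<close> by (intro frac_le) auto
  finally show ?thesis by simp
qed

lemma tendsto_deriv2_over_deriv_square_0:
  fixes g g' g'' :: "'a \<Rightarrow> real"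
  assumes "filterlim g at_top F" "((\<lambda>t. g' t ^ 2 / (g t * g'' t)) \<longlongrightarrow> q) F" "q \<noteq> 0"
  shows "((\<lambda>t. g'' t / g' t ^ 2) \<longlongrightarrow> 0) F"
proof -
  have "((\<lambda>t. inverse (g t) * inverse (g' t ^ 2 / (g t * g'' t))) \<longlongrightarrow> 0) F"
    using tendsto_mult[OF tendsto_inverse_0_at_top[OF assms(1)] tendsto_inverse[OF assms(2,3)]]
    by simp
  moreover have "eventually (\<lambda>t. g t \<noteq> 0) F"
    using filterlim_at_top_dense[THEN iffD1, OF assms(1), rule_format, of 0] by eventually_elim auto
  then have "eventually (\<lambda>t. inverse (g t) * inverse (g' t ^ 2 / (g t * g'' t)) = g'' t / g' t ^ 2) F"
    by eventually_elim (simp add: field_simps)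
  ultimately show ?thesis
    by (rule Lim_transform_eventually)
qed

(* In the language of regular variation: 1/u is self-neglecting, because (1/u)' \<rightarrow> 0. *)
lemma tendsto_SUP_shifted_ratio_if_deriv_over_square_tendsto_0:
  fixes u u' :: "real \<Rightarrow> real"
  assumes deriv: "\<And>x. x \<ge> a \<Longrightarrow> (u has_real_derivative u' x) (at x within {a..})"
    and lower: "\<And>x. x \<ge> a \<Longrightarrow> u x \<ge> c" and "c > 0"
    and lim: "((\<lambda>x. u' x / u x ^ 2) \<longlongrightarrow> 0) at_top" and "M > 0"
  shows "((\<lambda>t. SUP y\<in>{-M..M}. \<bar>u (t + y / u t) / u t - 1\<bar>) \<longlongrightarrow> 0) at_top"
proof (rule tendsto_SUP_abs_0_if_uniform)
  show "{-M..M} \<noteq> {}" using \<open>M > 0\<close> by simp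
  fix e :: real assume "e > 0"
  define \<delta> where "\<delta> = min (1 / 2) (e / 2)"
  have "\<delta> > 0" "\<delta> \<le> 1 / 2" "2 * \<delta> \<le> e" using \<open>e > 0\<close> by (auto simp: \<delta>_def)
  have u_pos: "u x > 0" if "x \<ge> a" for x
    using lower[OF that] \<open>c > 0\<close> by linarith
  have inverse_deriv:
    "((\<lambda>x. inverse (u x)) has_real_derivative - (u' x / u x ^ 2)) (at x within {a..})"
    if "x \<ge> a" for x
    using DERIV_inverse_fun[OF deriv[OF that]] u_pos[OF that]
    by (simp add: divide_inverse power2_eq_square)
  have "((\<lambda>x. - (u' x / u x ^ 2)) \<longlongrightarrow> 0) at_top"
    using tendsto_minus[OF lim] by simp
  then obtain T where "T \<ge> a" and lipschitz:
    "\<And>x z. x \<ge> T \<Longrightarrow> z \<ge> T \<Longrightarrow> \<bar>inverse (u z) - inverse (u x)\<bar> \<le> \<delta> / M * \<bar>z - x\<bar>"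
    using eventually_lipschitz_if_deriv_tendsto_0[OF inverse_deriv] \<open>\<delta> > 0\<close> \<open>M > 0\<close>
    by (metis divide_pos_pos)
  show "eventually (\<lambda>t. \<forall>y\<in>{-M..M}. \<bar>u (t + y / u t) / u t - 1\<bar> \<le> e) at_top"
    using eventually_ge_at_top[of "T + M / c"]
  proof eventually_elim
    case (elim t)
    have "t \<ge> T" using elim \<open>M > 0\<close> \<open>c > 0\<close> divide_pos_pos[of M c] by linarith
    then have "u t \<ge> c" "u t > 0" using \<open>T \<ge> a\<close> lower u_pos by auto
    show ?case
    proof
      fix y assume "y \<in> {-M..M}"
      define s where "s = y / u t"
      have "\<bar>s\<bar> \<le> M / u t"
        using \<open>y \<in> {-M..M}\<close> \<open>u t > 0\<close> by (simp add: s_def abs_le_iff divide_right_mono)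
      moreover have "M / u t \<le> M / c"
        using \<open>M > 0\<close> \<open>c > 0\<close> \<open>u t \<ge> c\<close> by (simp add: frac_le)
      ultimately have "t + s \<ge> T" using elim by (simp add: abs_le_iff)
      then have "\<bar>inverse (u (t + s)) - inverse (u t)\<bar> \<le> \<delta> / M * \<bar>s\<bar>"
        using lipschitz[OF \<open>t \<ge> T\<close> \<open>t + s \<ge> T\<close>] by simp
      also have "\<dots> \<le> \<delta> / M * (M / u t)"
        using \<open>\<bar>s\<bar> \<le> M / u t\<close> \<open>\<delta> > 0\<close> \<open>M > 0\<close> by (intro mult_left_mono) auto
      also have "\<dots> = \<delta> / u t" using \<open>M > 0\<close> by simp
      finally have "\<bar>u (t + s) / u t - 1\<bar> \<le> 2 * \<delta>"
        using \<open>\<delta> \<le> 1 / 2\<close> \<open>u t > 0\<close> u_pos \<open>t + s \<ge> T\<close> \<open>T \<ge> a\<close>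
        by (intro abs_ratio_sub_1_le_if_abs_inverse_diff_le) auto
      then show "\<bar>u (t + y / u t) / u t - 1\<bar> \<le> e"
        using \<open>2 * \<delta> \<le> e\<close> by (simp add: s_def)
    qed
  qed
qed

theorem lemma2p5:
  fixes f f' f'' g g' g'' :: "real \<Rightarrow> real" and t0 :: real
  assumes t0: "t0 \<ge> 0"
    and f_nonneg: "\<And>t. t \<ge> 0 \<Longrightarrow> f t \<ge> 0"
    and f_C1: "\<And>t. t \<ge> 0 \<Longrightarrow> (f has_real_derivative f' t) (at t within {0..})"
    and f'_cont: "continuous_on {0..} f'"
    and f_pos: "\<And>t. t \<ge> t0 \<Longrightarrow> f t > 0"
    and f_C2: "\<And>t. t \<ge> t0 \<Longrightarrow> (f' has_real_derivative f'' t) (at t within {t0..})"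
    and f''_cont: "continuous_on {t0..} f''"
    and g_def: "\<And>t. t \<ge> t0 \<Longrightarrow> g t = ln (f t)"
    and g_deriv: "\<And>t. t \<ge> t0 \<Longrightarrow> (g has_real_derivative g' t) (at t within {t0..})"
    and g'_deriv: "\<And>t. t \<ge> t0 \<Longrightarrow> (g' has_real_derivative g'' t) (at t within {t0..})"
    and H1_i: "\<And>t. t \<ge> t0 \<Longrightarrow> g' t > 0 \<and> g'' t > 0"
    and H1: "\<exists>(q::real) (p::ereal).
              ((q = 1 \<and> 0 < p) \<or> (q > 1 \<and> 0 < p \<and> p < \<infinity>)) \<and>
              ((\<lambda>t. g' t ^ 2 / (g t * g'' t)) \<longlongrightarrow> q) at_top \<and>
              ((\<lambda>t. ereal (t * g' t / g t)) \<longlongrightarrow> p) at_top \<and>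
              (q = 1 \<longrightarrow>
                 mono_on {t0..} (\<lambda>t. t * g' t / g t) \<and>
                 (\<exists>(k::nat) gh gh' gh''. k \<ge> 1 \<and>
                    (\<forall>t\<ge>t0. (gh has_real_derivative gh' t) (at t within {t0..})) \<and>
                    (\<forall>t\<ge>t0. (gh' has_real_derivative gh'' t) (at t within {t0..})) \<and>
                    continuous_on {t0..} gh'' \<and>
                    (\<forall>t\<ge>t0. f t = exp_iter k (gh t)) \<and>
                    antimono_on {t0..} (\<lambda>t. gh' t / gh t)))"
  shows "\<forall>M>0. ((\<lambda>t. SUP y\<in>{-M..M}. \<bar>g' (t + y / g' t) / g' t - 1\<bar>) \<longlongrightarrow> 0) at_top"
proof (intro allI impI)
  fix M :: real assume "M > 0"
  obtain q where q_lim: "((\<lambda>t. g' t ^ 2 / (g t * g'' t)) \<longlongrightarrow> q) at_top" and "q \<ge> 1"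
    using H1 by force
  have "g'' t \<ge> 0" if "t \<ge> t0" for t
    using H1_i[OF that] by simp
  then have "mono_on {t0..} g'"
    using g'_deriv by (rule mono_on_atLeast_if_deriv_nonneg[rotated])
  then have g'_lower: "g' t \<ge> g' t0" if "t \<ge> t0" for t
    using that by (auto intro: mono_onD)
  have "g' t0 > 0" using H1_i by blast
  have "filterlim g at_top at_top"
    using g_deriv g'_lower \<open>g' t0 > 0\<close> by (rule filterlim_at_top_if_deriv_ge_pos)
  then have "((\<lambda>t. g'' t / g' t ^ 2) \<longlongrightarrow> 0) at_top"
    using q_lim \<open>q \<ge> 1\<close> by (intro tendsto_deriv2_over_deriv_square_0) auto
  then show "((\<lambda>t. SUP y\<in>{-M..M}. \<bar>g' (t + y / g' t) / g' t - 1\<bar>) \<longlongrightarrow> 0) at_top"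
    using g'_deriv g'_lower \<open>g' t0 > 0\<close> \<open>M > 0\<close>
    by (intro tendsto_SUP_shifted_ratio_if_deriv_over_square_tendsto_0)
qed

end
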